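(* For every integer $c \ge 4$ and every $n \ge 3$, there is no wait-free algorithm for the $c$-cycle agreement problem among $n$ processes in the non-uniform iterated immediate snapshot (NIIS) model.
   Context: Graphical approximate agreement on a connected undirected graph $G=(V,E)$ (known to all processes): each process $p_i$ receives an input vertex $x_i \in V$ and each process that does not crash must output a vertex $y_i \in V$ such that (agreement) any two output vertices are equal or adjacent in $G$, and (validity) every output vertex lies on some shortest path in $G$ between two (not necessarily distinct) input vertices. The $c$-cycle agreement problem is graphical approximate agreement on the cycle graph with vertices $0,1,\dots,c-1$ and edges $\{a,a+1 \bmod c\}$; every vertex is a possible input. NIIS model: processes $p_0,\dots,p_{n-1}$ communicate through an infinite sequence $S_1,S_2,\dots$ of single-writer atomic snapshot objects, each with $n$ components initially $-$; $\mathsf{update}(x)$ by $p_i$ sets component $i$ to $x$, and $\mathsf{scan}$ returns all components atomically. Initially the state of $p_i$ is its identifier and its input. The scheduler repeatedly selects a nonempty set of processes all poised to access the same snapshot object $S_r$; each of them performs $\mathsf{update}$ of its own component of $S_r$ with its current state, and then each of them performs one $\mathsf{scan}$ of $S_r$; its new state is its identifier together with the scan result. A deterministic function $\Delta$ of the state decides, after each scan, whether the process outputs a value (and terminates) or continues with the next snapshot object. An algorithm is wait-free if there is no infinite schedule from any initial configuration. *)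

theory Defs
  imports Main
begin

definition walk :: "'v set \<Rightarrow> ('v \<Rightarrow> 'v \<Rightarrow> bool) \<Rightarrow> 'v list \<Rightarrow> 'v \<Rightarrow> 'v \<Rightarrow> bool" where
  "walk V E p u w \<longleftrightarrow> p \<noteq> [] \<and> hd p = u \<and> last p = w \<and> set p \<subseteq> V \<and>
     (\<forall>k. Suc k < length p \<longrightarrow> E (p ! k) (p ! Suc k))"

definition shortest_path :: "'v set \<Rightarrow> ('v \<Rightarrow> 'v \<Rightarrow> bool) \<Rightarrow> 'v list \<Rightarrow> 'v \<Rightarrow> 'v \<Rightarrow> bool" where
  "shortest_path V E p u w \<longleftrightarrow> walk V E p u w \<and> (\<forall>q. walk V E q u w \<longrightarrow> length p \<le> length q)"

definition on_shortest_path :: "'v set \<Rightarrow> ('v \<Rightarrow> 'v \<Rightarrow> bool) \<Rightarrow> 'v \<Rightarrow> 'v \<Rightarrow> 'v \<Rightarrow> bool" where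
  "on_shortest_path V E v u w \<longleftrightarrow> (\<exists>p. shortest_path V E p u w \<and> v \<in> set p)"

definition cycle_V :: "nat \<Rightarrow> nat set" where
  "cycle_V c = {..<c}"

definition cycle_E :: "nat \<Rightarrow> nat \<Rightarrow> nat \<Rightarrow> bool" where
  "cycle_E c a b \<longleftrightarrow> a < c \<and> b < c \<and> (b = (a + 1) mod c \<or> a = (b + 1) mod c)"

text \<open>Process states: initially (identifier, input); after a scan,
  (identifier, scan result), the scan result being a vector of n components,
  each either "-" (None) or a state.\<close>

datatype state = Init nat nat | View nat "state option list"

record config =
  st  :: "nat \<Rightarrow> state"
  rnd :: "nat \<Rightarrow> nat"                   \<comment> \<open>index of the snapshot object the process is poised to access (0 = S_1)\<close>
  out :: "nat \<Rightarrow> nat option"            \<comment> \<open>output (Some y once the process has output y and terminated)\<close>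
  mem :: "nat \<Rightarrow> nat \<Rightarrow> state option"   \<comment> \<open>mem r j = component j of snapshot object S_(r+1)\<close>

definition init_config :: "(nat \<Rightarrow> nat) \<Rightarrow> config" where
  "init_config x = \<lparr> st = (\<lambda>i. Init i (x i)), rnd = (\<lambda>_. 0), out = (\<lambda>_. None),
                      mem = (\<lambda>_ _. None) \<rparr>"

definition niis_step :: "nat \<Rightarrow> (state \<Rightarrow> nat option) \<Rightarrow> config \<Rightarrow> nat set \<Rightarrow> config \<Rightarrow> bool" where
  "niis_step n \<Delta> C P C' \<longleftrightarrow>
     P \<noteq> {} \<and> P \<subseteq> {..<n} \<and> (\<forall>i\<in>P. out C i = None) \<and>
     (\<exists>r. (\<forall>i\<in>P. rnd C i = r) \<and>
        (let m' = (mem C)(r := (\<lambda>j. if j \<in> P then Some (st C j) else mem C r j));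
             view = (\<lambda>i. View i (map (\<lambda>j. m' r j) [0..<n]))
         in C' = \<lparr> st = (\<lambda>i. if i \<in> P then view i else st C i),
                   rnd = (\<lambda>i. if i \<in> P then Suc r else rnd C i),
                   out = (\<lambda>i. if i \<in> P then \<Delta> (view i) else out C i),
                   mem = m' \<rparr>))"

definition reachable :: "nat \<Rightarrow> (state \<Rightarrow> nat option) \<Rightarrow> (nat \<Rightarrow> nat) \<Rightarrow> config \<Rightarrow> bool" where
  "reachable n \<Delta> x C \<longleftrightarrow> (\<lambda>A B. \<exists>P. niis_step n \<Delta> A P B)\<^sup>*\<^sup>* (init_config x) C"

definition wait_free :: "nat \<Rightarrow> (state \<Rightarrow> nat option) \<Rightarrow> (nat \<Rightarrow> nat) set \<Rightarrow> bool" where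
  "wait_free n \<Delta> Inputs \<longleftrightarrow>
     (\<forall>x \<in> Inputs. \<not> (\<exists>Cs Ps. Cs 0 = init_config x \<and> (\<forall>k. niis_step n \<Delta> (Cs k) (Ps k) (Cs (Suc k)))))"

definition gaa_inputs :: "nat \<Rightarrow> nat set \<Rightarrow> (nat \<Rightarrow> nat) set" where
  "gaa_inputs n V = {x. \<forall>i<n. x i \<in> V}"

definition gaa_safe :: "nat \<Rightarrow> nat set \<Rightarrow> (nat \<Rightarrow> nat \<Rightarrow> bool) \<Rightarrow> (nat \<Rightarrow> nat) \<Rightarrow> config \<Rightarrow> bool" where
  "gaa_safe n V E x C \<longleftrightarrow>
     (\<forall>i<n. \<forall>y. out C i = Some y \<longrightarrow>
         y \<in> V \<and> (\<exists>j<n. \<exists>k<n. on_shortest_path V E y (x j) (x k))) \<and>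
     (\<forall>i<n. \<forall>j<n. \<forall>y z. out C i = Some y \<longrightarrow> out C j = Some z \<longrightarrow> y = z \<or> E y z)"

definition wait_free_solves_gaa :: "nat \<Rightarrow> nat set \<Rightarrow> (nat \<Rightarrow> nat \<Rightarrow> bool) \<Rightarrow> (state \<Rightarrow> nat option) \<Rightarrow> bool" where
  "wait_free_solves_gaa n V E \<Delta> \<longleftrightarrow>
     wait_free n \<Delta> (gaa_inputs n V) \<and>
     (\<forall>x \<in> gaa_inputs n V. \<forall>C. reachable n \<Delta> x C \<longrightarrow> gaa_safe n V E x C)"

end

theory Submission
  imports Defs
begin

text \<open>Suppose \<Delta> solves c-cycle agreement wait-free. Wait-freedom makes the rounds of the
  protocol well founded, so by induction over rounds every edge between the endpoints of two
  processes carries an integer winding: for two decided endpoints the signed step between their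
  outputs on the cycle, and for an edge with a running endpoint the sum over the three edges into
  which the next immediate-snapshot round subdivides it. Validity makes the winding of the input
  edge with inputs a and a + 1 equal to 1, and that of an edge with equal inputs 0. Agreement makes
  the winding additive around every triangle of three processes: on decided triangles because
  three pairwise adjacent or equal vertices of a cycle of length at least 4 have zero circulation,
  and on running triangles because the chambers of the subdivided triangle glue back to its
  boundary. Going once around the inputs 0, 1, \<dots>, c - 1 then gives c = 0.\<close>

section \<open>Steps on the cycle\<close>

definition cycle_step :: "nat \<Rightarrow> nat \<Rightarrow> nat \<Rightarrow> int" where
  "cycle_step c a b = (if b = Suc a mod c then 1 else if a = Suc b mod c then -1 else 0)"

lemma Suc_mod_neq_self: "2 \<le> c \<Longrightarrow> a < c \<Longrightarrow> Suc a mod c \<noteq> a"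
  by (cases "Suc a = c") auto

lemma Suc_Suc_mod_neq_self: "3 \<le> c \<Longrightarrow> a < c \<Longrightarrow> Suc (Suc a mod c) mod c \<noteq> a"
  by (cases "Suc (Suc a) < c") (auto simp: mod_Suc_eq not_less mod_if)

lemma cycle_step_mod:
  assumes "2 \<le> c" "y < c" "z < c" "y = z \<or> cycle_E c y z"
  shows "(int y + cycle_step c y z) mod int c = int z mod int c \<and> \<bar>cycle_step c y z\<bar> \<le> 1"
proof -
  have Suc_mod: "int (Suc a mod c) = (int a + 1) mod int c" for a
    by (simp add: zmod_int add.commute)
  consider "y = z" | "z = Suc y mod c" | "y = Suc z mod c" "z \<noteq> Suc y mod c"
    using assms(4) unfolding cycle_E_def by auto
  then show ?thesis
  proof cases
    case 1
    then show ?thesis using Suc_mod_neq_self[OF assms(1,3)] by (auto simp: cycle_step_def)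
  next
    case 2
    then show ?thesis by (simp add: cycle_step_def Suc_mod mod_simps)
  next
    case 3
    have "int y = (int z + 1) mod int c" using 3(1) Suc_mod by simp
    then have "(int y - 1) mod int c = int z mod int c" by (simp add: mod_diff_left_eq)
    then show ?thesis using 3 by (simp add: cycle_step_def)
  qed
qed

lemma cycle_step_triangle:
  assumes "4 \<le> c" "y0 < c" "y1 < c" "y2 < c"
    "y0 = y1 \<or> cycle_E c y0 y1" "y1 = y2 \<or> cycle_E c y1 y2" "y0 = y2 \<or> cycle_E c y0 y2"
  shows "cycle_step c y0 y1 + cycle_step c y1 y2 - cycle_step c y0 y2 = 0"
proof -
  have "2 \<le> c" using assms(1) by simp
  note steps = cycle_step_mod[OF this assms(2,3,5)] cycle_step_mod[OF this assms(3,4,6)]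
    cycle_step_mod[OF this assms(2,4,7)]
  let ?s = "cycle_step c y0 y1 + cycle_step c y1 y2 - cycle_step c y0 y2"
  have "(int y0 + ?s) mod int c = ((int y0 + cycle_step c y0 y1) + cycle_step c y1 y2
      - cycle_step c y0 y2) mod int c"
    by (simp add: algebra_simps)
  also have "\<dots> = ((int y1 + cycle_step c y1 y2) - cycle_step c y0 y2) mod int c"
    using steps(1) by (metis mod_add_left_eq mod_diff_left_eq)
  also have "\<dots> = ((int y0 + cycle_step c y0 y2) - cycle_step c y0 y2) mod int c"
    using steps(2,3) by (metis mod_diff_left_eq)
  finally have "int c dvd ?s" by (simp add: mod_eq_dvd_iff)
  moreover have "\<bar>?s\<bar> < int c" using steps assms(1) by linarith
  ultimately show ?thesis using dvd_imp_le_int[of ?s "int c"] by fastforce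
qed

lemma cycle_step_on_edge:
  assumes "3 \<le> c" "a < c" "y \<in> {a, Suc a mod c}" "z \<in> {a, Suc a mod c}"
  shows "cycle_step c y z = of_bool (z \<noteq> a) - of_bool (y \<noteq> a)"
  using assms Suc_mod_neq_self[of c a] Suc_mod_neq_self[of c "Suc a mod c"]
    Suc_Suc_mod_neq_self[of c a]
  by (auto simp: cycle_step_def simp del: mod_Suc)

lemma shortest_path_short:
  assumes "shortest_path V E p u w" "walk V E q u w" "length q \<le> 2"
  shows "set p \<subseteq> {u, w}"
proof -
  have "walk V E p u w" "length p \<le> 2"
    using assms unfolding shortest_path_def by fastforce+
  then show ?thesis
    unfolding walk_def by (cases p rule: remdups_adj.cases) auto
qed

lemma on_shortest_path_loop:
  assumes "a \<in> V" "on_shortest_path V E v a a"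
  shows "v = a"
proof -
  have "walk V E [a] a a" using assms(1) unfolding walk_def by simp
  then show ?thesis
    using assms(2) shortest_path_short unfolding on_shortest_path_def by fastforce
qed

lemma on_shortest_path_edge:
  assumes "a \<in> V" "b \<in> V" "E a b" "on_shortest_path V E v a b"
  shows "v = a \<or> v = b"
proof -
  have "walk V E [a, b] a b" using assms(1-3) unfolding walk_def by (simp add: less_Suc_eq)
  then show ?thesis
    using assms(4) shortest_path_short unfolding on_shortest_path_def by fastforce
qed

section \<open>Runs and wait-freedom\<close>

definition run_block :: "nat \<Rightarrow> (state \<Rightarrow> nat option) \<Rightarrow> config \<Rightarrow> nat set \<Rightarrow> nat \<Rightarrow> config" where
  "run_block n \<Delta> C P r =
    (let m' = (mem C)(r := (\<lambda>j. if j \<in> P then Some (st C j) else mem C r j));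
         view = (\<lambda>i. View i (map (\<lambda>j. m' r j) [0..<n]))
     in \<lparr> st = (\<lambda>i. if i \<in> P then view i else st C i),
          rnd = (\<lambda>i. if i \<in> P then Suc r else rnd C i),
          out = (\<lambda>i. if i \<in> P then \<Delta> (view i) else out C i),
          mem = m' \<rparr>)"

lemma niis_step_run_block:
  "P \<noteq> {} \<Longrightarrow> P \<subseteq> {..<n} \<Longrightarrow> \<forall>i\<in>P. out C i = None \<Longrightarrow> \<forall>i\<in>P. rnd C i = r
    \<Longrightarrow> niis_step n \<Delta> C P (run_block n \<Delta> C P r)"
  unfolding niis_step_def run_block_def Let_def by (intro conjI exI[of _ r]) auto

lemma run_block_simps:
  "mem (run_block n \<Delta> C P r) = (mem C)(r := (\<lambda>j. if j \<in> P then Some (st C j) else mem C r j))"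
  "st (run_block n \<Delta> C P r) p =
    (if p \<in> P then View p (map (mem (run_block n \<Delta> C P r) r) [0..<n]) else st C p)"
  "out (run_block n \<Delta> C P r) p =
    (if p \<in> P then \<Delta> (View p (map (mem (run_block n \<Delta> C P r) r) [0..<n])) else out C p)"
  "rnd (run_block n \<Delta> C P r) p = (if p \<in> P then Suc r else rnd C p)"
  by (simp_all add: run_block_def Let_def)

definition infinite_run :: "nat \<Rightarrow> (state \<Rightarrow> nat option) \<Rightarrow> config \<Rightarrow> bool" where
  "infinite_run n \<Delta> C \<longleftrightarrow>
    (\<exists>Cs Ps. Cs 0 = C \<and> (\<forall>k. niis_step n \<Delta> (Cs k) (Ps k) (Cs (Suc k))))"

lemma infinite_run_step:
  assumes "niis_step n \<Delta> C P C'" "infinite_run n \<Delta> C'"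
  shows "infinite_run n \<Delta> C"
proof -
  obtain Cs Ps where "Cs 0 = C'" "\<forall>k. niis_step n \<Delta> (Cs k) (Ps k) (Cs (Suc k))"
    using assms(2) unfolding infinite_run_def by blast
  then have "\<forall>k. niis_step n \<Delta> (case_nat C Cs k) (case_nat P Ps k) (case_nat C Cs (Suc k))"
    using assms(1) by (auto split: nat.split)
  then show ?thesis
    unfolding infinite_run_def by (intro exI[of _ "case_nat C Cs"] exI[of _ "case_nat P Ps"]) simp
qed

lemma infinite_run_rtranclp:
  "(\<lambda>A B. \<exists>P. niis_step n \<Delta> A P B)\<^sup>*\<^sup>* C C' \<Longrightarrow> infinite_run n \<Delta> C' \<Longrightarrow> infinite_run n \<Delta> C"
  by (induction rule: converse_rtranclp_induct) (auto intro: infinite_run_step)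

lemma wait_free_no_infinite_run:
  "wait_free n \<Delta> Inputs \<Longrightarrow> x \<in> Inputs \<Longrightarrow> reachable n \<Delta> x C \<Longrightarrow> \<not> infinite_run n \<Delta> C"
  unfolding wait_free_def reachable_def using infinite_run_rtranclp
  by (metis infinite_run_def)

locale niis =
  fixes n :: nat and \<Delta> :: "state \<Rightarrow> nat option"
begin

abbreviation moves :: "config \<Rightarrow> config \<Rightarrow> bool" where
  "moves \<equiv> \<lambda>C C'. \<exists>P. niis_step n \<Delta> C P C'"

definition later :: "(nat \<Rightarrow> nat) \<Rightarrow> (config \<times> config) set" where
  "later x = {(C', C). reachable n \<Delta> x C \<and> moves\<^sup>+\<^sup>+ C C'}"

lemma wf_later:
  assumes "wait_free n \<Delta> Inputs" "x \<in> Inputs"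
  shows "wf (later x)"
proof -
  let ?R = "{(C', C). reachable n \<Delta> x C \<and> moves C C'}"
  have "later x \<subseteq> ?R\<^sup>+"
  proof (clarsimp simp: later_def)
    fix C C' assume C: "reachable n \<Delta> x C" and "moves\<^sup>+\<^sup>+ C C'"
    from this(2) show "(C', C) \<in> ?R\<^sup>+"
    proof (induction rule: tranclp_induct)
      case (base C')
      then show ?case using C by auto
    next
      case (step C' C'')
      then have "reachable n \<Delta> x C'"
        using C unfolding reachable_def by (meson rtranclp_trans tranclp_into_rtranclp)
      then show ?case using step by (auto intro: trancl_into_trancl2)
    qed
  qed
  moreover have "wf ?R"
    unfolding wf_iff_no_infinite_down_chain
  proof
    assume "\<exists>f. \<forall>i. (f (Suc i), f i) \<in> ?R"
    then obtain f where f: "\<forall>i. (f (Suc i), f i) \<in> ?R" by blast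
    then obtain Ps where "\<forall>i. niis_step n \<Delta> (f i) (Ps i) (f (Suc i))" by simp metis
    then have "infinite_run n \<Delta> (f 0)" unfolding infinite_run_def by blast
    moreover have "reachable n \<Delta> x (f 0)" using f by auto
    ultimately show False using wait_free_no_infinite_run assms by blast
  qed
  ultimately show ?thesis using wf_subset wf_trancl by blast
qed

end

section \<open>Immediate-snapshot rounds\<close>

datatype endpoint = is_decided: Decided nat | Running state

fun at_endpoint :: "config \<Rightarrow> nat \<Rightarrow> endpoint \<Rightarrow> nat \<Rightarrow> bool" where
  "at_endpoint C p (Decided y) r \<longleftrightarrow> out C p = Some y"
| "at_endpoint C p (Running s) r \<longleftrightarrow> out C p = None \<and> st C p = s \<and> rnd C p = r"

fun ordered_partition :: "nat set list \<Rightarrow> nat set \<Rightarrow> bool" where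
  "ordered_partition [] A \<longleftrightarrow> A = {}"
| "ordered_partition (B # bs) A \<longleftrightarrow> B \<noteq> {} \<and> B \<subseteq> A \<and> ordered_partition bs (A - B)"

fun views :: "nat set list \<Rightarrow> nat \<Rightarrow> nat set" where
  "views [] p = {}"
| "views (B # bs) p = (if p \<in> B then B else B \<union> views bs p)"

definition restrict_partition :: "nat set \<Rightarrow> nat set list \<Rightarrow> nat set list" where
  "restrict_partition A bs = filter (\<lambda>B. B \<noteq> {}) (map (\<lambda>B. B \<inter> A) bs)"

lemma ordered_partition_restrict:
  "ordered_partition bs I \<Longrightarrow> ordered_partition (restrict_partition A bs) (I \<inter> A)"
proof (induction bs arbitrary: I)
  case (Cons B bs)
  then have "ordered_partition (restrict_partition A bs) ((I - B) \<inter> A)" by simp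
  moreover have "(I - B) \<inter> A = I \<inter> A - B \<inter> A" by blast
  ultimately show ?case using Cons.prems by (auto simp: restrict_partition_def Int_absorb1 Diff_triv)
qed (simp add: restrict_partition_def)

lemma views_restrict: "p \<in> A \<Longrightarrow> views (restrict_partition A bs) p = views bs p \<inter> A"
  by (induction bs) (auto simp: restrict_partition_def)

context niis
begin

definition view_state :: "nat \<Rightarrow> nat set \<Rightarrow> (nat \<Rightarrow> state) \<Rightarrow> state" where
  "view_state p K \<sigma> = View p (map (\<lambda>j. if j \<in> K then Some (\<sigma> j) else None) [0..<n])"

definition next_endpoint :: "state \<Rightarrow> endpoint" where
  "next_endpoint v = (case \<Delta> v of Some y \<Rightarrow> Decided y | None \<Rightarrow> Running v)"

definition after :: "(nat \<Rightarrow> state) \<Rightarrow> nat set \<Rightarrow> (nat \<Rightarrow> endpoint) \<Rightarrow> nat set \<Rightarrow> nat \<Rightarrow> endpoint" where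
  "after \<sigma> A e K p = (if p \<in> A then next_endpoint (view_state p (K \<inter> A) \<sigma>) else e p)"

lemma view_state_cong: "(\<And>q. q \<in> K \<Longrightarrow> \<sigma> q = \<sigma>' q) \<Longrightarrow> view_state p K \<sigma> = view_state p K \<sigma>'"
  unfolding view_state_def by (auto intro: map_cong)

definition realizes :: "(nat \<Rightarrow> nat) \<Rightarrow> config \<Rightarrow> nat set \<Rightarrow> (nat \<Rightarrow> endpoint) \<Rightarrow> nat \<Rightarrow> bool" where
  "realizes x C I e r \<longleftrightarrow> reachable n \<Delta> x C \<and> (\<forall>p\<in>I. at_endpoint C p (e p) r)
     \<and> (\<forall>r'\<ge>r. \<forall>j. mem C r' j = None)"

lemma realizes_Running: "realizes x C I e r \<Longrightarrow> p \<in> I \<Longrightarrow> e p = Running s \<Longrightarrow> st C p = s"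
  unfolding realizes_def by (metis at_endpoint.simps(2))

lemma realizes_Decided:
  "realizes x C I e r \<Longrightarrow> p \<in> I \<Longrightarrow> e p = Decided y \<Longrightarrow> reachable n \<Delta> x C \<and> out C p = Some y"
  unfolding realizes_def by (metis at_endpoint.simps(1))

text \<open>Configuration in the middle of round r: the processes of K have already written
  their state from \<sigma> to object r and taken their snapshot, with views \<kappa>; the remaining
  processes of A have not yet accessed object r.\<close>

definition in_round ::
  "(nat \<Rightarrow> nat) \<Rightarrow> config \<Rightarrow> nat \<Rightarrow> (nat \<Rightarrow> state) \<Rightarrow> nat set \<Rightarrow> nat set \<Rightarrow> (nat \<Rightarrow> nat set)
    \<Rightarrow> bool" where
  "in_round x C r \<sigma> A K \<kappa> \<longleftrightarrow> reachable n \<Delta> x C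
     \<and> (\<forall>j. mem C r j = (if j \<in> K then Some (\<sigma> j) else None))
     \<and> (\<forall>r'>r. \<forall>j. mem C r' j = None)
     \<and> (\<forall>p\<in>A - K. out C p = None \<and> rnd C p = r \<and> st C p = \<sigma> p)
     \<and> (\<forall>p\<in>K. st C p = view_state p (\<kappa> p) \<sigma> \<and> out C p = \<Delta> (view_state p (\<kappa> p) \<sigma>)
          \<and> rnd C p = Suc r)"

lemma in_round_run_block:
  assumes C: "in_round x C r \<sigma> A K \<kappa>" and B: "B \<noteq> {}" "B \<subseteq> A - K" and A: "A \<subseteq> {..<n}"
  defines "C' \<equiv> run_block n \<Delta> C B r"
  shows "moves C C'" "in_round x C' r \<sigma> A (K \<union> B) (\<lambda>p. if p \<in> B then K \<union> B else \<kappa> p)"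
    "\<And>p. p \<notin> B \<Longrightarrow> out C' p = out C p"
proof -
  have B_poised: "\<forall>p\<in>B. out C p = None \<and> rnd C p = r \<and> st C p = \<sigma> p"
    using C B unfolding in_round_def by blast
  then have "niis_step n \<Delta> C B C'"
    unfolding C'_def using B A by (intro niis_step_run_block) auto
  then show "moves C C'" by blast
  then have "reachable n \<Delta> x C'"
    using C unfolding in_round_def reachable_def by (blast intro: rtranclp.rtrancl_into_rtrancl)
  moreover have mem_r: "mem C' r = (\<lambda>j. if j \<in> K \<union> B then Some (\<sigma> j) else None)"
    using C B_poised unfolding in_round_def C'_def by (auto simp: run_block_simps)
  moreover have "View p (map (mem C' r) [0..<n]) = view_state p (K \<union> B) \<sigma>" for p
    unfolding mem_r view_state_def by simp
  ultimately show "in_round x C' r \<sigma> A (K \<union> B) (\<lambda>p. if p \<in> B then K \<union> B else \<kappa> p)"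
    using C unfolding in_round_def C'_def by (auto simp: run_block_simps)
  show "\<And>p. p \<notin> B \<Longrightarrow> out C' p = out C p"
    unfolding C'_def by (simp add: run_block_simps)
qed

lemma in_round_run_blocks:
  assumes "in_round x C r \<sigma> A K \<kappa>" "ordered_partition bs (A - K)" "K \<subseteq> A" "A \<subseteq> {..<n}"
  shows "\<exists>C'. (if bs = [] then C' = C else moves\<^sup>+\<^sup>+ C C')
    \<and> in_round x C' r \<sigma> A A (\<lambda>p. if p \<in> K then \<kappa> p else K \<union> views bs p)
    \<and> (\<forall>p. p \<notin> A \<longrightarrow> out C' p = out C p)"
  using assms
proof (induction bs arbitrary: C K \<kappa>)
  case Nil
  then have "K = A" by auto
  with Nil show ?case by (intro exI[of _ C]) (auto simp: in_round_def)
next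
  case (Cons B bs)
  let ?C1 = "run_block n \<Delta> C B r" and ?\<kappa>1 = "\<lambda>p. if p \<in> B then K \<union> B else \<kappa> p"
  have B: "B \<noteq> {}" "B \<subseteq> A - K" "ordered_partition bs (A - (K \<union> B))"
    using Cons.prems(2) by (auto simp: set_diff_eq)
  note C1 = in_round_run_block[OF Cons.prems(1) B(1,2) Cons.prems(4)]
  obtain C' where C': "if bs = [] then C' = ?C1 else moves\<^sup>+\<^sup>+ ?C1 C'"
    "in_round x C' r \<sigma> A A (\<lambda>p. if p \<in> K \<union> B then ?\<kappa>1 p else K \<union> B \<union> views bs p)"
    "\<forall>p. p \<notin> A \<longrightarrow> out C' p = out ?C1 p"
    using Cons.IH[OF C1(2) B(3)] B(2) Cons.prems(3,4) by auto
  have "moves\<^sup>+\<^sup>+ C C'"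
    using C'(1) C1(1) by (cases "bs = []") (auto intro: tranclp_into_tranclp2)
  moreover have "(\<lambda>p. if p \<in> K \<union> B then ?\<kappa>1 p else K \<union> B \<union> views bs p)
      = (\<lambda>p. if p \<in> K then \<kappa> p else K \<union> views (B # bs) p)"
    using B(2) by (auto simp: fun_eq_iff)
  ultimately show ?case using C'(2,3) C1(3) B(2) by (intro exI[of _ C']) auto
qed

lemma run_round_blocks:
  assumes C: "realizes x C I e r" and A: "A = {p \<in> I. \<not> is_decided (e p)}" "A \<subseteq> {..<n}"
    and bs: "ordered_partition bs A" "bs \<noteq> []"
  shows "\<exists>C'. (C', C) \<in> later x
    \<and> realizes x C' I (\<lambda>p. if p \<in> A then next_endpoint (view_state p (views bs p) (st C)) else e p) (Suc r)"
proof -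
  have "out C p = None \<and> rnd C p = r" if "p \<in> A" for p
    using that C unfolding A(1) realizes_def by (cases "e p") auto
  then have start: "in_round x C r (st C) A {} (\<lambda>_. {})"
    using C unfolding in_round_def realizes_def by auto
  then obtain C' where C': "moves\<^sup>+\<^sup>+ C C'" "in_round x C' r (st C) A A (views bs)"
    "\<forall>p. p \<notin> A \<longrightarrow> out C' p = out C p"
    using in_round_run_blocks[OF start, of bs] bs A(2) by auto
  have "(C', C) \<in> later x" using C'(1) C unfolding later_def realizes_def by auto
  moreover have "at_endpoint C' p
      (if p \<in> A then next_endpoint (view_state p (views bs p) (st C)) else e p) (Suc r)"
    if "p \<in> I" for p
  proof (cases "e p")
    case (Decided y)
    then show ?thesis using that C'(3) C unfolding A(1) realizes_def by force
  next
    case (Running s)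
    then show ?thesis using that C'(2) unfolding A(1) in_round_def
      by (auto simp: next_endpoint_def split: option.split)
  qed
  moreover have "\<forall>r'\<ge>Suc r. \<forall>j. mem C' r' j = None" "reachable n \<Delta> x C'"
    using C'(2) unfolding in_round_def by auto
  ultimately show ?thesis unfolding realizes_def by blast
qed

lemma run_round:
  assumes C: "realizes x C I e r" and I: "I \<subseteq> {..<n}" "\<exists>p\<in>I. \<not> is_decided (e p)"
    and bs: "ordered_partition bs I"
  defines "A \<equiv> {p \<in> I. \<not> is_decided (e p)}"
  shows "\<exists>C'. (C', C) \<in> later x \<and> realizes x C' I (\<lambda>p. after (st C) A e (views bs p) p) (Suc r)"
proof -
  let ?bs = "restrict_partition A bs"
  have "I \<inter> A = A" unfolding A_def by blast
  then have part: "ordered_partition ?bs A"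
    using ordered_partition_restrict[OF bs, of A] by simp
  moreover have "?bs \<noteq> []" using part I(2) unfolding A_def by auto
  moreover have "A \<subseteq> {..<n}" using I(1) unfolding A_def by blast
  ultimately obtain C' where "(C', C) \<in> later x"
    "realizes x C' I (\<lambda>p. if p \<in> A then next_endpoint (view_state p (views ?bs p) (st C)) else e p)
      (Suc r)"
    using run_round_blocks[OF C A_def[THEN meta_eq_to_obj_eq]] by blast
  moreover have "(\<lambda>p. if p \<in> A then next_endpoint (view_state p (views ?bs p) (st C)) else e p)
      = (\<lambda>p. after (st C) A e (views bs p) p)"
    by (auto simp: after_def views_restrict)
  ultimately show ?thesis by auto
qed

definition round_start :: "nat set \<Rightarrow> (nat \<Rightarrow> state) \<Rightarrow> nat set \<Rightarrow> (nat \<Rightarrow> endpoint) \<Rightarrow> bool" where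
  "round_start J \<sigma> A e \<longleftrightarrow>
    (\<forall>p\<in>J. (p \<in> A \<longleftrightarrow> \<not> is_decided (e p)) \<and> (\<forall>s. e p = Running s \<longrightarrow> \<sigma> p = s))"

lemma round_start_subset: "round_start J \<sigma> A e \<Longrightarrow> J' \<subseteq> J \<Longrightarrow> round_start J' \<sigma> A e"
  unfolding round_start_def by blast

lemma after_cong:
  assumes "round_start J \<sigma> A e" "round_start J \<sigma>' A' e'" "\<forall>q\<in>J. e q = e' q" "K \<subseteq> J" "p \<in> J"
  shows "after \<sigma> A e K p = after \<sigma>' A' e' K p"
proof -
  have A: "q \<in> A \<longleftrightarrow> q \<in> A'" if "q \<in> J" for q
    using assms(1-3) that unfolding round_start_def by auto
  have "view_state p (K \<inter> A) \<sigma> = view_state p (K \<inter> A') \<sigma>'"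
  proof -
    have "K \<inter> A = K \<inter> A'" using A assms(4) by blast
    moreover have "\<sigma> q = \<sigma>' q" if "q \<in> K \<inter> A" for q
      using that assms(1-4) unfolding round_start_def
      by (cases "e q") (auto simp: subset_iff)
    ultimately show ?thesis by (auto intro: view_state_cong)
  qed
  then show ?thesis using A[OF assms(5)] assms(3,5) by (simp add: after_def)
qed

lemma round_start_Decided: "round_start J \<sigma> A e \<Longrightarrow> p \<in> J \<Longrightarrow> e p = Decided y \<Longrightarrow> p \<notin> A"
  unfolding round_start_def by auto

lemma after_decided: "p \<notin> A \<Longrightarrow> after \<sigma> A e K p = e p"
  by (simp add: after_def)

lemma round_induct [consumes 4, case_names decided round]:
  assumes "realizes x C I e r" "wait_free n \<Delta> Inputs" "x \<in> Inputs" "I \<subseteq> {..<n}"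
    and decided: "\<And>C e r. realizes x C I e r \<Longrightarrow> \<forall>p\<in>I. is_decided (e p) \<Longrightarrow> P e"
    and round: "\<And>e \<sigma> A. round_start I \<sigma> A e \<Longrightarrow> \<exists>p\<in>I. \<not> is_decided (e p) \<Longrightarrow>
      (\<And>bs. ordered_partition bs I \<Longrightarrow> P (\<lambda>p. after \<sigma> A e (views bs p) p)) \<Longrightarrow> P e"
  shows "P e"
proof -
  have "\<forall>e r. realizes x C I e r \<longrightarrow> P e"
  proof (induction C rule: wf_induct_rule[OF wf_later[OF assms(2,3)]])
    case (1 C)
    show ?case
    proof (intro allI impI)
      fix e r assume C: "realizes x C I e r"
      define A where "A = {q \<in> I. \<not> is_decided (e q)}"
      show "P e"
      proof (cases "\<forall>p\<in>I. is_decided (e p)")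
        case True
        then show ?thesis using decided C by blast
      next
        case False
        then have "P (\<lambda>p. after (st C) A e (views bs p) p)" if "ordered_partition bs I" for bs
          using run_round[OF C assms(4) _ that] "1.IH" unfolding A_def by blast
        moreover have "round_start I (st C) A e"
          using realizes_Running[OF C] unfolding round_start_def A_def by blast
        ultimately show ?thesis using round False by blast
      qed
    qed
  qed
  then show ?thesis using assms(1) by blast
qed

end

section \<open>Winding of protocol edges\<close>

locale niis_cycle = niis +
  fixes c :: nat
begin

text \<open>One round subdivides an edge into the path i sees {i}, j sees {i, j}, i sees {i, j},
  j sees {j}; its middle edge is traversed from j to i.\<close>

inductive winds :: "nat \<Rightarrow> nat \<Rightarrow> endpoint \<Rightarrow> endpoint \<Rightarrow> int \<Rightarrow> bool" for i j where
  decided: "winds i j (Decided a) (Decided b) (cycle_step c a b)"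
| round: "round_start {i, j} \<sigma> A e \<Longrightarrow> A \<inter> {i, j} \<noteq> {} \<Longrightarrow>
    winds i j (after \<sigma> A e {i} i) (after \<sigma> A e {i, j} j) v1 \<Longrightarrow>
    winds i j (after \<sigma> A e {i, j} i) (after \<sigma> A e {i, j} j) v2 \<Longrightarrow>
    winds i j (after \<sigma> A e {i, j} i) (after \<sigma> A e {j} j) v3 \<Longrightarrow>
    winds i j (e i) (e j) (v1 - v2 + v3)"

lemma winds_unique: "winds i j f g v \<Longrightarrow> winds i j f g w \<Longrightarrow> v = w"
proof (induction arbitrary: w rule: winds.induct)
  case (decided a b)
  from decided show ?case
    by (cases rule: winds.cases) (auto dest: round_start_Decided[OF _ _ sym])
next
  case (round \<sigma> A e v1 v2 v3)
  from round.prems show ?case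
  proof (cases rule: winds.cases)
    case (decided a b)
    then show ?thesis using round.hyps(1,2) by (auto simp: round_start_def)
  next
    case (round \<sigma>' A' e' v1' v2' v3')
    have "after \<sigma> A e K p = after \<sigma>' A' e' K p" if "K \<subseteq> {i, j}" "p \<in> {i, j}" for K p
      using after_cong[OF round.hyps(1) round(4)] round(1,2) that by auto
    then show ?thesis using round.IH round(3,6-8) by auto
  qed
qed

definition winding :: "nat \<Rightarrow> nat \<Rightarrow> endpoint \<Rightarrow> endpoint \<Rightarrow> int" where
  "winding i j f g = (THE v. winds i j f g v)"

lemma winding_eq: "winds i j f g v \<Longrightarrow> winding i j f g = v"
  unfolding winding_def using winds_unique by blast

lemma winds_after:
  assumes "round_start {i, j} \<sigma> A e"
    "winds i j (after \<sigma> A e {i} i) (after \<sigma> A e {i, j} j) v1"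
    "winds i j (after \<sigma> A e {i, j} i) (after \<sigma> A e {i, j} j) v2"
    "winds i j (after \<sigma> A e {i, j} i) (after \<sigma> A e {j} j) v3"
  shows "winds i j (e i) (e j) (v1 - v2 + v3)"
proof (cases "A \<inter> {i, j} = {}")
  case True
  then have "after \<sigma> A e K p = e p" if "p \<in> {i, j}" for K p
    using that by (auto simp: after_decided)
  then show ?thesis using assms(2-4) winds_unique by fastforce
qed (use assms winds.round in blast)

lemma winding_after:
  assumes "round_start {i, j} \<sigma> A e"
    "\<exists>v. winds i j (after \<sigma> A e {i} i) (after \<sigma> A e {i, j} j) v"
    "\<exists>v. winds i j (after \<sigma> A e {i, j} i) (after \<sigma> A e {i, j} j) v"
    "\<exists>v. winds i j (after \<sigma> A e {i, j} i) (after \<sigma> A e {j} j) v"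
  shows "(\<exists>v. winds i j (e i) (e j) v) \<and> winding i j (e i) (e j) =
    winding i j (after \<sigma> A e {i} i) (after \<sigma> A e {i, j} j)
    - winding i j (after \<sigma> A e {i, j} i) (after \<sigma> A e {i, j} j)
    + winding i j (after \<sigma> A e {i, j} i) (after \<sigma> A e {j} j)"
  using assms winds_after[OF assms(1)] winding_eq by metis

inductive solo_decides :: "nat \<Rightarrow> endpoint \<Rightarrow> nat \<Rightarrow> bool" for i where
  decided: "solo_decides i (Decided y) y"
| round: "round_start {i} \<sigma> A e \<Longrightarrow> i \<in> A \<Longrightarrow> solo_decides i (after \<sigma> A e {i} i) y \<Longrightarrow>
    solo_decides i (e i) y"

lemma solo_decides_unique: "solo_decides i f y \<Longrightarrow> solo_decides i f z \<Longrightarrow> y = z"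
proof (induction arbitrary: z rule: solo_decides.induct)
  case (decided y)
  from decided show ?case
    by (cases rule: solo_decides.cases) (auto dest: round_start_Decided[OF _ _ sym])
next
  case (round \<sigma> A e y)
  from round.prems show ?case
  proof (cases rule: solo_decides.cases)
    case decided
    then show ?thesis using round.hyps(1,2) by (auto simp: round_start_def)
  next
    case (round \<sigma>' A' e')
    then show ?thesis
      using after_cong[OF round.hyps(1) round(2)] round.IH by auto
  qed
qed

lemma solo_decides_after:
  "round_start {i} \<sigma> A e \<Longrightarrow> solo_decides i (after \<sigma> A e {i} i) y \<Longrightarrow> solo_decides i (e i) y"
  by (cases "i \<in> A") (auto simp: after_decided intro: solo_decides.round)

definition winds_by_solo :: "nat \<Rightarrow> nat \<Rightarrow> nat \<Rightarrow> endpoint \<Rightarrow> endpoint \<Rightarrow> bool" where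
  "winds_by_solo a i j f g \<longleftrightarrow> (\<exists>y z. solo_decides i f y \<and> solo_decides j g z
    \<and> winds i j f g (of_bool (z \<noteq> a) - of_bool (y \<noteq> a)))"

lemma winds_by_solo_round:
  assumes st: "round_start {i, j} \<sigma> A e" and ij: "i \<noteq> j"
    and chamber: "\<And>bs. ordered_partition bs {i, j} \<Longrightarrow>
      winds_by_solo a i j (after \<sigma> A e (views bs i) i) (after \<sigma> A e (views bs j) j)"
  shows "winds_by_solo a i j (e i) (e j)"
proof -
  let ?a = "after \<sigma> A e"
  have "ordered_partition [{i}, {j}] {i, j}" "ordered_partition [{i, j}] {i, j}"
    "ordered_partition [{j}, {i}] {i, j}"
    using ij by auto
  note chambers = this[THEN chamber]
  obtain y1 z1 where 1: "solo_decides i (?a {i} i) y1" "solo_decides j (?a {i, j} j) z1"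
    "winds i j (?a {i} i) (?a {i, j} j) (of_bool (z1 \<noteq> a) - of_bool (y1 \<noteq> a))"
    using chambers(1) ij by (auto simp: winds_by_solo_def insert_commute)
  obtain y2 z2 where 2: "solo_decides i (?a {i, j} i) y2" "solo_decides j (?a {i, j} j) z2"
    "winds i j (?a {i, j} i) (?a {i, j} j) (of_bool (z2 \<noteq> a) - of_bool (y2 \<noteq> a))"
    using chambers(2) by (auto simp: winds_by_solo_def)
  obtain y3 z3 where 3: "solo_decides i (?a {i, j} i) y3" "solo_decides j (?a {j} j) z3"
    "winds i j (?a {i, j} i) (?a {j} j) (of_bool (z3 \<noteq> a) - of_bool (y3 \<noteq> a))"
    using chambers(3) ij by (auto simp: winds_by_solo_def insert_commute)
  have "z2 = z1" "y3 = y2" using 1 2 3 solo_decides_unique by blast+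
  then have "winds i j (e i) (e j) (of_bool (z3 \<noteq> a) - of_bool (y1 \<noteq> a))"
    using winds_after[OF st 1(3) 2(3) 3(3)] by simp
  moreover have "solo_decides i (e i) y1" "solo_decides j (e j) z3"
    using solo_decides_after round_start_subset[OF st] 1(1) 3(2) by blast+
  ultimately show ?thesis unfolding winds_by_solo_def by blast
qed

definition triangle_closes ::
  "nat \<Rightarrow> nat \<Rightarrow> nat \<Rightarrow> endpoint \<Rightarrow> endpoint \<Rightarrow> endpoint \<Rightarrow> bool" where
  "triangle_closes i j k f g h \<longleftrightarrow>
    (\<exists>v. winds i j f g v) \<and> (\<exists>v. winds j k g h v) \<and> (\<exists>v. winds i k f h v)
    \<and> winding i j f g + winding j k g h = winding i k f h"

lemma triangle_closes_round:
  assumes "round_start {i, j, k} \<sigma> A e" and ijk: "distinct [i, j, k]"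
    and chamber: "\<And>bs. ordered_partition bs {i, j, k} \<Longrightarrow> triangle_closes i j k
      (after \<sigma> A e (views bs i) i) (after \<sigma> A e (views bs j) j) (after \<sigma> A e (views bs k) k)"
  shows "triangle_closes i j k (e i) (e j) (e k)"
proof -
  let ?a = "after \<sigma> A e"
  have st: "round_start {i, j} \<sigma> A e" "round_start {j, k} \<sigma> A e" "round_start {i, k} \<sigma> A e"
    using round_start_subset[OF assms(1)] by auto
  have "ordered_partition [{i}, {j}, {k}] {i, j, k}" "ordered_partition [{i}, {k}, {j}] {i, j, k}"
    "ordered_partition [{j}, {i}, {k}] {i, j, k}" "ordered_partition [{j}, {k}, {i}] {i, j, k}"
    "ordered_partition [{k}, {i}, {j}] {i, j, k}" "ordered_partition [{k}, {j}, {i}] {i, j, k}"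
    "ordered_partition [{i, j}, {k}] {i, j, k}" "ordered_partition [{j, k}, {i}] {i, j, k}"
    "ordered_partition [{i, k}, {j}] {i, j, k}" "ordered_partition [{k}, {i, j}] {i, j, k}"
    "ordered_partition [{i}, {j, k}] {i, j, k}" "ordered_partition [{j}, {i, k}] {i, j, k}"
    "ordered_partition [{i, j, k}] {i, j, k}"
    using ijk by auto
  note chambers = this[THEN chamber]
  \<comment> \<open>Each interior edge of the subdivided triangle lies in two chambers with opposite
    orientations, so the chamber identities add up to the unfolded boundary.\<close>
  have "(\<exists>v. winds i j (e i) (e j) v) \<and> winding i j (e i) (e j) =
    winding i j (?a {i} i) (?a {i, j} j) - winding i j (?a {i, j} i) (?a {i, j} j)
    + winding i j (?a {i, j} i) (?a {j} j)"
    by (rule winding_after[OF st(1)])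
      (use ijk chambers in \<open>auto simp: triangle_closes_def insert_commute\<close>)
  moreover have "(\<exists>v. winds j k (e j) (e k) v) \<and> winding j k (e j) (e k) =
    winding j k (?a {j} j) (?a {j, k} k) - winding j k (?a {j, k} j) (?a {j, k} k)
    + winding j k (?a {j, k} j) (?a {k} k)"
    by (rule winding_after[OF st(2)])
      (use ijk chambers in \<open>auto simp: triangle_closes_def insert_commute\<close>)
  moreover have "(\<exists>v. winds i k (e i) (e k) v) \<and> winding i k (e i) (e k) =
    winding i k (?a {i} i) (?a {i, k} k) - winding i k (?a {i, k} i) (?a {i, k} k)
    + winding i k (?a {i, k} i) (?a {k} k)"
    by (rule winding_after[OF st(3)])
      (use ijk chambers in \<open>auto simp: triangle_closes_def insert_commute\<close>)
  ultimately show ?thesis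
    using ijk chambers unfolding triangle_closes_def by (simp add: insert_commute)
qed

end

locale cycle_solver = niis_cycle +
  assumes c_ge_4: "4 \<le> c" and n_ge_3: "3 \<le> n"
    and solves: "wait_free_solves_gaa n (cycle_V c) (cycle_E c) \<Delta>"
begin

lemma wait_free: "wait_free n \<Delta> (gaa_inputs n (cycle_V c))"
  using solves unfolding wait_free_solves_gaa_def by blast

lemma output_valid:
  assumes "x \<in> gaa_inputs n (cycle_V c)" "reachable n \<Delta> x C" "p < n" "out C p = Some y"
  shows "y < c \<and> (\<exists>j<n. \<exists>k<n. on_shortest_path (cycle_V c) (cycle_E c) y (x j) (x k))"
  using solves assms unfolding wait_free_solves_gaa_def gaa_safe_def cycle_V_def by blast

lemma outputs_agree:
  assumes "x \<in> gaa_inputs n (cycle_V c)" "reachable n \<Delta> x C" "p < n" "q < n"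
    "out C p = Some y" "out C q = Some z"
  shows "y = z \<or> cycle_E c y z"
  using solves assms unfolding wait_free_solves_gaa_def gaa_safe_def by blast

lemma solo_run:
  assumes "realizes x C {i} e r" "x \<in> gaa_inputs n (cycle_V c)" "i < n"
  shows "\<exists>y C'. solo_decides i (e i) y \<and> reachable n \<Delta> x C' \<and> out C' i = Some y"
proof -
  have "{i} \<subseteq> {..<n}" using assms(3) by simp
  with assms(1) wait_free assms(2) show ?thesis
  proof (induction rule: round_induct)
    case (decided C e r)
    then obtain y where y: "e i = Decided y" by (cases "e i") auto
    then have "reachable n \<Delta> x C \<and> out C i = Some y"
      using realizes_Decided[OF decided(1)] by simp
    then show ?case using y solo_decides.decided by auto
  next
    case (round e \<sigma> A)
    have "ordered_partition [{i}] {i}" by simp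
    then obtain y C' where "solo_decides i (after \<sigma> A e {i} i) y" "reachable n \<Delta> x C'"
      "out C' i = Some y"
      using round(3) by fastforce
    then show ?case using solo_decides_after[OF round(1)] by blast
  qed
qed

lemma realizes_init: "realizes x (init_config x) I (\<lambda>p. Running (Init p (x p))) 0"
  by (simp add: realizes_def reachable_def init_config_def)

lemma solo_decides_input:
  assumes "solo_decides i (Running (Init i a)) y" "a < c" "i < n"
  shows "y = a"
proof -
  let ?x = "\<lambda>_. a"
  have x: "?x \<in> gaa_inputs n (cycle_V c)" using assms(2) by (simp add: gaa_inputs_def cycle_V_def)
  obtain y' C' where y': "solo_decides i (Running (Init i a)) y'" "reachable n \<Delta> ?x C'"
    "out C' i = Some y'"
    using solo_run[OF realizes_init x assms(3)] by auto
  then have "y' = a"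
    using output_valid[OF x] on_shortest_path_loop[of a "cycle_V c"] assms(2,3)
    by (fastforce simp: cycle_V_def)
  then show ?thesis using solo_decides_unique[OF assms(1) y'(1)] by simp
qed

lemma output_on_edge:
  assumes x: "x \<in> gaa_inputs n (cycle_V c)" and "a < c" "\<forall>p<n. x p \<in> {a, Suc a mod c}"
    and "reachable n \<Delta> x C" "p < n" "out C p = Some y"
  shows "y \<in> {a, Suc a mod c}"
proof -
  obtain j k where jk: "j < n" "k < n" "on_shortest_path (cycle_V c) (cycle_E c) y (x j) (x k)"
    using output_valid[OF x assms(4-6)] by blast
  have "a \<in> cycle_V c" "Suc a mod c \<in> cycle_V c" "cycle_E c a (Suc a mod c)"
    "cycle_E c (Suc a mod c) a"
    using assms(2) c_ge_4 by (auto simp: cycle_V_def cycle_E_def)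
  then show ?thesis
    using assms(3) jk on_shortest_path_loop[of _ "cycle_V c" "cycle_E c" y]
      on_shortest_path_edge[of _ "cycle_V c" _ "cycle_E c" y]
    by (metis insertCI insertE singletonD)
qed

lemma realizes_winds_by_solo:
  assumes "realizes x C {i, j} e r" "x \<in> gaa_inputs n (cycle_V c)" "i \<noteq> j" "i < n" "j < n"
    and a: "a < c" "\<forall>p<n. x p \<in> {a, Suc a mod c}"
  shows "winds_by_solo a i j (e i) (e j)"
proof -
  have "{i, j} \<subseteq> {..<n}" using assms(4,5) by simp
  with assms(1) wait_free assms(2) show ?thesis
  proof (induction rule: round_induct)
    case (decided C e r)
    then obtain y z where yz: "e i = Decided y" "e j = Decided z"
      by (metis endpoint.collapse(1) insertCI)
    then have "reachable n \<Delta> x C" "out C i = Some y" "out C j = Some z"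
      using realizes_Decided[OF decided(1)] by auto
    then have "y \<in> {a, Suc a mod c}" "z \<in> {a, Suc a mod c}"
      using output_on_edge[OF assms(2) a] assms(4,5) by blast+
    then have "cycle_step c y z = of_bool (z \<noteq> a) - of_bool (y \<noteq> a)"
      using cycle_step_on_edge c_ge_4 a(1) by simp
    then show ?case
      unfolding winds_by_solo_def using yz winds.decided solo_decides.decided by metis
  next
    case (round e \<sigma> A)
    then show ?case using winds_by_solo_round[OF round(1) assms(3)] by blast
  qed
qed

lemma realizes_triangle_closes:
  assumes "realizes x C {i, j, k} e r" "x \<in> gaa_inputs n (cycle_V c)" "distinct [i, j, k]"
    "i < n" "j < n" "k < n"
  shows "triangle_closes i j k (e i) (e j) (e k)"
proof -
  have "{i, j, k} \<subseteq> {..<n}" using assms(4-6) by simp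
  with assms(1) wait_free assms(2) show ?thesis
  proof (induction rule: round_induct)
    case (decided C e r)
    then obtain y0 y1 y2 where y: "e i = Decided y0" "e j = Decided y1" "e k = Decided y2"
      by (metis endpoint.collapse(1) insertCI)
    then have C: "reachable n \<Delta> x C"
      and out: "out C i = Some y0" "out C j = Some y1" "out C k = Some y2"
      using realizes_Decided[OF decided(1)] by auto
    have "y0 < c" "y1 < c" "y2 < c"
      using output_valid[OF assms(2) C] out assms(4-6) by blast+
    moreover have "y0 = y1 \<or> cycle_E c y0 y1" "y1 = y2 \<or> cycle_E c y1 y2"
      "y0 = y2 \<or> cycle_E c y0 y2"
      using outputs_agree[OF assms(2) C] out assms(4-6) by blast+
    ultimately have "cycle_step c y0 y1 + cycle_step c y1 y2 - cycle_step c y0 y2 = 0"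
      using cycle_step_triangle[OF c_ge_4] by blast
    then show ?case
      unfolding triangle_closes_def using y winds.decided winding_eq by (simp; metis)
  next
    case (round e \<sigma> A)
    then show ?case using triangle_closes_round[OF round(1) assms(3)] by blast
  qed
qed

lemma winding_inputs_edge:
  assumes "a < c" "b \<in> {a, Suc a mod c}"
  shows "winding 0 1 (Running (Init 0 a)) (Running (Init 1 b)) = of_bool (b \<noteq> a)"
proof -
  define x where "x p = (if p = 1 then b else a)" for p :: nat
  have x: "x \<in> gaa_inputs n (cycle_V c)" "\<forall>p<n. x p \<in> {a, Suc a mod c}"
    using assms by (auto simp: x_def gaa_inputs_def cycle_V_def)
  obtain y z where "solo_decides 0 (Running (Init 0 a)) y" "solo_decides 1 (Running (Init 1 b)) z"
    "winds 0 1 (Running (Init 0 a)) (Running (Init 1 b)) (of_bool (z \<noteq> a) - of_bool (y \<noteq> a))"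
    using realizes_winds_by_solo[where i = 0 and j = 1, OF realizes_init x(1) _ _ _ assms(1) x(2)]
      n_ge_3
    by (auto simp: x_def winds_by_solo_def)
  moreover have "b < c" using assms by auto
  ultimately show ?thesis
    using solo_decides_input assms(1) n_ge_3 winding_eq by fastforce
qed

lemma winding_inputs_triangle:
  assumes "a < c" "b < c" "d < c"
  shows "winding 0 1 (Running (Init 0 a)) (Running (Init 1 b))
    + winding 1 2 (Running (Init 1 b)) (Running (Init 2 d))
    = winding 0 2 (Running (Init 0 a)) (Running (Init 2 d))"
proof -
  define x where "x p = (if p = 0 then a else if p = 1 then b else d)" for p :: nat
  have "x \<in> gaa_inputs n (cycle_V c)"
    using assms by (auto simp: x_def gaa_inputs_def cycle_V_def)
  from realizes_triangle_closes[where i = 0 and j = 1 and k = 2, OF realizes_init this] n_ge_3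
  show ?thesis
    by (simp add: triangle_closes_def x_def)
qed

lemma no_solution: False
proof -
  define f where "f a = winding 0 2 (Running (Init 0 a)) (Running (Init 2 0))" for a
  have c: "0 < c" using c_ge_4 by simp
  have descend: "f (Suc a mod c) = f a - 1" if a: "a < c" for a
  proof -
    let ?b = "Suc a mod c"
    have b: "?b < c" using c by simp
    have "?b \<noteq> a" using Suc_mod_neq_self[OF _ a] c_ge_4 by simp
    then have "winding 0 1 (Running (Init 0 a)) (Running (Init 1 ?b)) = 1"
      using winding_inputs_edge[OF a, of ?b] by simp
    moreover have "winding 0 1 (Running (Init 0 ?b)) (Running (Init 1 ?b)) = 0"
      using winding_inputs_edge[OF b, of ?b] by simp
    ultimately show ?thesis
      using winding_inputs_triangle[OF a b c] winding_inputs_triangle[OF b b c]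
      unfolding f_def by linarith
  qed
  have down: "f a = f 0 - int a" if "a < c" for a
    using that
  proof (induction a)
    case (Suc a)
    then show ?case using descend[of a] by (simp del: mod_Suc add: mod_less)
  qed simp
  have "f 0 = f (c - 1) - 1"
    using descend[of "c - 1"] c by (simp del: mod_Suc)
  also have "\<dots> = f 0 - int c" using down[of "c - 1"] c by simp
  finally show False using c by simp
qed

end

theorem mainTheorem1:
  fixes c n :: nat
  assumes "c \<ge> 4" and "n \<ge> 3"
  shows "\<not> (\<exists>\<Delta>. wait_free_solves_gaa n (cycle_V c) (cycle_E c) \<Delta>)"
proof
  assume "\<exists>\<Delta>. wait_free_solves_gaa n (cycle_V c) (cycle_E c) \<Delta>"
  then obtain \<Delta> where "wait_free_solves_gaa n (cycle_V c) (cycle_E c) \<Delta>" by blast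
  then interpret cycle_solver n \<Delta> c using assms by unfold_locales
  show False by (rule no_solution)
qed

end
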